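(* Let $S$ be a sticky tree with $n$ edges ($n\ge 1$). If the Tamari interval $[\mathrm{D}(S),\mathrm{E}(S)]$ is synchronized, then every non-root node of $S$ that is not a leaf is primary.
   Context: Sticky trees: a plane tree is a rooted tree in which the children of every node are linearly ordered (left to right). The root has depth $0$, a child of a node of depth $d$ has depth $d+1$; a leaf is a node without children. The prefix order is: the root, followed by the prefix order of the subtree of its leftmost child, then of its second child, and so on. $S_u$ denotes the subtree rooted at $u$. A sticky tree is a plane tree $S$ with node set $V$ and a labeling $\ell:V\to\mathbb{N}$ such that: (1) every node $u$ of depth $d$ has $0\le\ell(u)\le d$; (2) every node $u$ of depth $d>0$ has some $v\in S_u$ (possibly $v=u$) with $\ell(v)<d$; (3) for every node $u$ of depth $d$, if some $v\in S_u$ has $\ell(v)=d$, then every node of $S_u$ (including $u$) preceding $v$ in prefix order has label at least $d$. A non-root node is primary if its label equals its depth. The certificate of a non-root node $u$ of depth $d$ is the first node, in prefix order, of $S_u$ whose label is $<d$. The certificate-counting function $c:V\to\mathbb{N}$ assigns to each node $w$ the number of non-root nodes whose certificate is $w$. The words: $\mathrm{E}(S)$ is the word in $\{u,d\}$ obtained by the depth-first traversal of $S$ from the root visiting children left to right, writing $u$ for each move from a node to a child and $d$ for each move back to the parent. If $v_1,\dots,v_n$ are the non-root nodes of $S$ in prefix order, $\mathrm{D}(S)=u\,d^{c(v_1)}\,u\,d^{c(v_2)}\cdots u\,d^{c(v_n)}$. These are Dyck paths of length $2n$ (words with $n$ letters $u$ and $n$ letters $d$, every prefix having at least as many $u$'s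 as $d$'s), and $[\mathrm{D}(S),\mathrm{E}(S)]$ is a Tamari interval. Synchronized intervals: the type of a Dyck path $D$ of length $2n$ is the word $w_1\cdots w_{n-1}$ over $\{N,E\}$ with $w_i=N$ if the $i$-th letter $u$ of $D$ is immediately followed by a letter $d$, and $w_i=E$ otherwise. A Tamari interval $[D_1,D_2]$ is synchronized if $D_1$ and $D_2$ have the same type. *)

theory Defs
  imports Main
begin

datatype ltree = LNode nat "ltree list"

fun root_label :: "ltree \<Rightarrow> nat" where
  "root_label (LNode a ts) = a"

fun children :: "ltree \<Rightarrow> ltree list" where
  "children (LNode a ts) = ts"

text \<open>Nodes are addressed by paths of child indices (0-based) from the root.\<close>
fun node_at :: "ltree \<Rightarrow> nat list \<Rightarrow> ltree option" where
  "node_at t [] = Some t"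
| "node_at (LNode a ts) (i # p) = (if i < length ts then node_at (ts ! i) p else None)"

definition nodes :: "ltree \<Rightarrow> nat list set" where
  "nodes t = {p. node_at t p \<noteq> None}"

definition label :: "ltree \<Rightarrow> nat list \<Rightarrow> nat" where
  "label t p = root_label (the (node_at t p))"

text \<open>Number of edges = number of non-root nodes.\<close>
definition num_edges :: "ltree \<Rightarrow> nat" where
  "num_edges t = card (nodes t) - 1"

definition is_leaf :: "ltree \<Rightarrow> nat list \<Rightarrow> bool" where
  "is_leaf t p = (children (the (node_at t p)) = [])"

definition in_subtree :: "nat list \<Rightarrow> nat list \<Rightarrow> bool" where
  "in_subtree u v = (\<exists>s. v = u @ s)"

definition pre_less :: "nat list \<Rightarrow> nat list \<Rightarrow> bool" where
  "pre_less p q = ((\<exists>s. s \<noteq> [] \<and> q = p @ s) \<or>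
     (\<exists>r i j s s'. p = r @ i # s \<and> q = r @ j # s' \<and> i < j))"

definition sticky :: "ltree \<Rightarrow> bool" where
  "sticky t = (
     (\<forall>u\<in>nodes t. label t u \<le> length u) \<and>
     (\<forall>u\<in>nodes t. u \<noteq> [] \<longrightarrow> (\<exists>v\<in>nodes t. in_subtree u v \<and> label t v < length u)) \<and>
     (\<forall>u\<in>nodes t. \<forall>v\<in>nodes t. in_subtree u v \<and> label t v = length u \<longrightarrow>
        (\<forall>w\<in>nodes t. in_subtree u w \<and> pre_less w v \<longrightarrow> label t w \<ge> length u)))"

definition primary :: "ltree \<Rightarrow> nat list \<Rightarrow> bool" where
  "primary t u = (u \<noteq> [] \<and> label t u = length u)"

definition certificate :: "ltree \<Rightarrow> nat list \<Rightarrow> nat list" where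
  "certificate t u = (THE v. v \<in> nodes t \<and> in_subtree u v \<and> label t v < length u \<and>
      (\<forall>w\<in>nodes t. in_subtree u w \<and> label t w < length u \<longrightarrow> \<not> pre_less w v))"

definition cert_count :: "ltree \<Rightarrow> nat list \<Rightarrow> nat" where
  "cert_count t w = card {u \<in> nodes t. u \<noteq> [] \<and> certificate t u = w}"

fun pre_tree :: "ltree \<Rightarrow> nat list list"
and pre_forest :: "nat \<Rightarrow> ltree list \<Rightarrow> nat list list" where
  "pre_tree (LNode a ts) = [] # pre_forest 0 ts"
| "pre_forest k [] = []"
| "pre_forest k (t # ts) = map (Cons k) (pre_tree t) @ pre_forest (Suc k) ts"

datatype step = U | Dn

fun euler :: "ltree \<Rightarrow> step list" where
  "euler (LNode a ts) = concat (map (\<lambda>s. U # euler s @ [Dn]) ts)"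

definition E_word :: "ltree \<Rightarrow> step list" where
  "E_word t = euler t"

definition D_word :: "ltree \<Rightarrow> step list" where
  "D_word t = concat (map (\<lambda>v. U # replicate (cert_count t v) Dn) (tl (pre_tree t)))"

definition is_dyck :: "step list \<Rightarrow> bool" where
  "is_dyck w = (count_list w U = count_list w Dn \<and>
     (\<forall>k\<le>length w. count_list (take k w) Dn \<le> count_list (take k w) U))"

definition tamari_step :: "step list \<Rightarrow> step list \<Rightarrow> bool" where
  "tamari_step w w' = (\<exists>a q b. is_dyck q \<and>
      w = a @ [Dn] @ (U # q @ [Dn]) @ b \<and> w' = a @ (U # q @ [Dn]) @ [Dn] @ b)"

definition tamari_le :: "step list \<Rightarrow> step list \<Rightarrow> bool" where
  "tamari_le w w' = (is_dyck w \<and> is_dyck w' \<and> length w = length w' \<and> tamari_step\<^sup>*\<^sup>* w w')"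

datatype NE = N | E

definition dyck_type :: "step list \<Rightarrow> NE list" where
  "dyck_type w = map (\<lambda>i. if Suc i < length w \<and> w ! Suc i = Dn then N else E)
      (butlast (filter (\<lambda>i. w ! i = U) [0..<length w]))"

definition synchronized :: "step list \<Rightarrow> step list \<Rightarrow> bool" where
  "synchronized w w' = (tamari_le w w' \<and> dyck_type w = dyck_type w')"

end

theory Submission
  imports Defs
begin

text \<open>
  Both words of the interval have one letter \<open>u\<close> per non-root node, in prefix order, so their
  types can be read node by node: the \<open>u\<close> of node \<open>v\<close> is followed by \<open>d\<close> in \<open>D(S)\<close> iff
  \<open>c(v) > 0\<close>, and in \<open>E(S)\<close> iff \<open>v\<close> is a leaf. The type omits only the last non-root node,
  which is a leaf. Hence, in a synchronized interval, every non-root node \<open>v\<close> that is not a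
  leaf has \<open>c(v) = 0\<close>. But a node whose label is below its depth is its own certificate, so
  \<open>c(v) = 0\<close> forces \<open>\<ell>(v) = depth(v)\<close>.
\<close>

fun starts_with_Dn :: "step list \<Rightarrow> bool" where
  "starts_with_Dn (Dn # _) = True"
| "starts_with_Dn _ = False"

text \<open>One flag per letter \<open>U\<close>: is it immediately followed by \<open>Dn\<close>? The type is the image of all
  flags but the last.\<close>
fun peak_flags :: "step list \<Rightarrow> bool list" where
  "peak_flags [] = []"
| "peak_flags (U # w) = starts_with_Dn w # peak_flags w"
| "peak_flags (Dn # w) = peak_flags w"

lemma peak_flags_conv_indices:
  "map (\<lambda>i. Suc i < length w \<and> w ! Suc i = Dn) (filter (\<lambda>i. w ! i = U) [0..<length w])
     = peak_flags w"
proof (induction w)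
  case Nil
  then show ?case by simp
next
  case (Cons x w)
  have upt: "[0..<length (x # w)] = 0 # map Suc [0..<length w]"
    by (simp add: upt_conv_Cons map_Suc_upt del: upt_Suc)
  have shift: "filter (\<lambda>i. (x # w) ! i = U) (map Suc [0..<length w])
      = map Suc (filter (\<lambda>i. w ! i = U) [0..<length w])"
    by (simp add: filter_map comp_def)
  have tail: "map (\<lambda>i. Suc i < length (x # w) \<and> (x # w) ! Suc i = Dn)
      (map Suc (filter (\<lambda>i. w ! i = U) [0..<length w])) = peak_flags w"
    using Cons by (simp add: comp_def)
  have first: "(Suc 0 < length (x # w) \<and> (x # w) ! Suc 0 = Dn) = starts_with_Dn w"
    by (cases w rule: starts_with_Dn.cases) auto
  show ?case
    unfolding upt using shift tail first by (cases x) simp_all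
qed

lemma dyck_type_conv_peak_flags:
  "dyck_type w = map (\<lambda>b. if b then N else E) (butlast (peak_flags w))"
proof -
  have "dyck_type w = map (\<lambda>b. if b then N else E)
      (map (\<lambda>i. Suc i < length w \<and> w ! Suc i = Dn) (butlast (filter (\<lambda>i. w ! i = U) [0..<length w])))"
    unfolding dyck_type_def by simp
  then show ?thesis
    by (simp only: map_butlast peak_flags_conv_indices)
qed

lemma dyck_type_eq_iff:
  "dyck_type w = dyck_type w' \<longleftrightarrow> butlast (peak_flags w) = butlast (peak_flags w')"
proof -
  have "inj (\<lambda>b. if b then N else E)"
    by (auto simp: inj_def split: if_splits)
  then show ?thesis
    by (simp add: dyck_type_conv_peak_flags inj_map_eq_map)
qed

lemma peak_flags_blocks:
  "peak_flags (concat (map (\<lambda>v. U # replicate (f v) Dn) vs)) = map (\<lambda>v. 0 < f v) vs"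
proof (induction vs)
  case Nil
  then show ?case by simp
next
  case (Cons v vs)
  have skip_Dn: "peak_flags (replicate k Dn @ w) = peak_flags w" for k w
    by (induction k) auto
  have "\<not> starts_with_Dn (concat (map (\<lambda>v. U # replicate (f v) Dn) vs))"
    by (cases vs) auto
  then show ?case
    using Cons skip_Dn by (cases "f v") simp_all
qed

lemma peak_flags_D_word:
  "peak_flags (D_word t) = map (\<lambda>v. 0 < cert_count t v) (tl (pre_tree t))"
  unfolding D_word_def by (rule peak_flags_blocks)

lemma peak_flags_append_Dn:
  "peak_flags (w @ Dn # w') = peak_flags (w @ [Dn]) @ peak_flags w'"
proof (induction w)
  case Nil
  then show ?case by simp
next
  case (Cons x w)
  have "starts_with_Dn (w @ Dn # w') = starts_with_Dn (w @ [Dn])"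
    by (cases w rule: starts_with_Dn.cases) auto
  with Cons show ?case by (cases x) simp_all
qed

lemma euler_Nil_or_ends_Dn: "euler t = [] \<or> (\<exists>w. euler t = w @ [Dn])"
proof (cases t)
  case (LNode a ts)
  then show ?thesis by (cases ts rule: rev_exhaust) auto
qed

lemma peak_flags_euler_append:
  "peak_flags (euler t @ w) = peak_flags (euler t) @ peak_flags w"
proof -
  consider "euler t = []" | e where "euler t = e @ [Dn]"
    using euler_Nil_or_ends_Dn by blast
  then show ?thesis
  proof cases
    case 1
    then show ?thesis by simp
  next
    case (2 e)
    then show ?thesis using peak_flags_append_Dn[of e w] by simp
  qed
qed

lemma starts_with_Dn_euler_append:
  "starts_with_Dn (euler t @ Dn # w) \<longleftrightarrow> children t = []"
proof (cases t)
  case (LNode a ts)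
  then show ?thesis by (cases ts) auto
qed

lemma pre_tree_conv_Cons: "pre_tree t = [] # tl (pre_tree t)"
  by (cases t) auto

lemma map_is_leaf_pre_forest:
  assumes "\<forall>i<length ts. us ! (k + i) = ts ! i" and "k + length ts \<le> length us"
  shows "map (is_leaf (LNode a us)) (pre_forest k ts)
           = concat (map (\<lambda>s. map (is_leaf s) (pre_tree s)) ts)"
  using assms
proof (induction ts arbitrary: k)
  case Nil
  then show ?case by simp
next
  case (Cons s ts)
  have "k < length us" "us ! k = s"
    using Cons.prems by (auto dest: spec[of _ 0])
  then have "map (is_leaf (LNode a us)) (map (Cons k) (pre_tree s)) = map (is_leaf s) (pre_tree s)"
    by (simp add: is_leaf_def)
  moreover have "map (is_leaf (LNode a us)) (pre_forest (Suc k) ts)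
                   = concat (map (\<lambda>s. map (is_leaf s) (pre_tree s)) ts)"
    using Cons.prems by (intro Cons.IH) (auto dest: spec[of _ "Suc _"])
  ultimately show ?case by simp
qed

lemma peak_flags_euler: "peak_flags (euler t) = map (is_leaf t) (tl (pre_tree t))"
proof (induction t)
  case (LNode a ts)
  have "peak_flags (euler (LNode a ts))
          = concat (map (\<lambda>s. (children s = []) # peak_flags (euler s)) ts)"
  proof (induction ts)
    case Nil
    then show ?case by simp
  next
    case (Cons s ts)
    then show ?case
      using peak_flags_euler_append[of s] starts_with_Dn_euler_append[of s] by simp
  qed
  also have "\<dots> = concat (map (\<lambda>s. map (is_leaf s) (pre_tree s)) ts)"
  proof -
    have "(children s = []) # peak_flags (euler s) = map (is_leaf s) (pre_tree s)"
      if "s \<in> set ts" for s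
      using LNode[OF that] by (subst pre_tree_conv_Cons) (simp add: is_leaf_def)
    then show ?thesis by (metis (no_types, lifting) map_eq_conv)
  qed
  also have "\<dots> = map (is_leaf (LNode a ts)) (pre_forest 0 ts)"
    by (rule map_is_leaf_pre_forest[symmetric]) auto
  finally show ?case by simp
qed

lemma last_peak_flags:
  assumes "last w = Dn" and "peak_flags w \<noteq> []"
  shows "last (peak_flags w)"
  using assms
proof (induction w)
  case Nil
  then show ?case by simp
next
  case (Cons x w)
  show ?case
  proof (cases "peak_flags w = []")
    case False
    then have "w \<noteq> []" by auto
    with False Cons have "last (peak_flags w)" by simp
    with False show ?thesis by (cases x) auto
  next
    case True
    then have "x = U" "w \<noteq> []" using Cons.prems by (cases x; auto)+
    with True obtain w' where "w = Dn # w'" by (cases w rule: starts_with_Dn.cases) auto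
    with \<open>x = U\<close> True show ?thesis by simp
  qed
qed

lemma is_leaf_last_pre_tree:
  assumes "tl (pre_tree t) \<noteq> []"
  shows "is_leaf t (last (tl (pre_tree t)))"
proof -
  have "peak_flags (euler t) \<noteq> []"
    using assms by (simp add: peak_flags_euler)
  moreover from this have "last (euler t) = Dn"
    using euler_Nil_or_ends_Dn[of t] by auto
  ultimately have "last (peak_flags (euler t))"
    using last_peak_flags by blast
  with assms show ?thesis by (simp add: peak_flags_euler last_map)
qed

lemma mem_pre_forest:
  "i < length ts \<Longrightarrow> p \<in> set (pre_tree (ts ! i)) \<Longrightarrow> (k + i) # p \<in> set (pre_forest k ts)"
proof (induction ts arbitrary: k i)
  case Nil
  then show ?case by simp
next
  case (Cons s ts)
  show ?case
  proof (cases i)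
    case 0
    with Cons.prems show ?thesis by simp
  next
    case (Suc j)
    with Cons.prems have "(Suc k + j) # p \<in> set (pre_forest (Suc k) ts)"
      by (intro Cons.IH) simp_all
    with Suc show ?thesis by simp
  qed
qed

lemma nodes_subset_pre_tree: "nodes t \<subseteq> set (pre_tree t)"
proof (induction t)
  case (LNode a ts)
  show ?case
  proof
    fix p assume p: "p \<in> nodes (LNode a ts)"
    show "p \<in> set (pre_tree (LNode a ts))"
    proof (cases p)
      case Nil
      then show ?thesis by simp
    next
      case (Cons i q)
      with p have i: "i < length ts" and "q \<in> nodes (ts ! i)"
        by (auto simp: nodes_def split: if_splits)
      then have "q \<in> set (pre_tree (ts ! i))" using LNode.IH[OF nth_mem[OF i]] by blast
      with i have "(0 + i) # q \<in> set (pre_forest 0 ts)" by (rule mem_pre_forest)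
      with Cons show ?thesis by simp
    qed
  qed
qed

lemma not_pre_less_extension: "\<not> pre_less (u @ s) u"
proof
  assume "pre_less (u @ s) u"
  then consider (desc) s' where "s' \<noteq> []" "u = (u @ s) @ s'"
    | (left) r i j s1 s2 where "u @ s = r @ i # s1" "u = r @ j # s2" "i < j"
    unfolding pre_less_def by blast
  then show False
  proof cases
    case desc
    then have "length u = length u + length s + length s'" by (metis length_append)
    with desc(1) show False by simp
  next
    case left
    then have "r @ j # (s2 @ s) = r @ i # s1" by simp
    with \<open>i < j\<close> show False by simp
  qed
qed

lemma certificate_self:
  assumes "u \<in> nodes t" and "label t u < length u"
  shows "certificate t u = u"
  unfolding certificate_def
proof (rule the_equality)
  show "u \<in> nodes t \<and> in_subtree u u \<and> label t u < length u \<and>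
      (\<forall>w\<in>nodes t. in_subtree u w \<and> label t w < length u \<longrightarrow> \<not> pre_less w u)"
    using assms not_pre_less_extension by (auto simp: in_subtree_def)
next
  fix v assume v: "v \<in> nodes t \<and> in_subtree u v \<and> label t v < length u \<and>
      (\<forall>w\<in>nodes t. in_subtree u w \<and> label t w < length u \<longrightarrow> \<not> pre_less w v)"
  then obtain s where s: "v = u @ s" by (auto simp: in_subtree_def)
  show "v = u"
  proof (rule ccontr)
    assume "v \<noteq> u"
    with s have "pre_less u v" by (auto simp: pre_less_def)
    with v assms show False by (auto simp: in_subtree_def)
  qed
qed

lemma cert_count_pos_if_label_less:
  assumes "u \<in> nodes t" and "u \<noteq> []" and "label t u < length u"
  shows "0 < cert_count t u"
proof -
  have "finite (nodes t)"
    using nodes_subset_pre_tree by (rule finite_subset) simp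
  moreover have "u \<in> {v \<in> nodes t. v \<noteq> [] \<and> certificate t v = u}"
    using assms certificate_self by simp
  ultimately show ?thesis
    unfolding cert_count_def by (auto simp: card_gt_0_iff)
qed

lemma cert_count_pos_iff_is_leaf:
  assumes "dyck_type (D_word t) = dyck_type (E_word t)"
    and "v \<in> set (butlast (tl (pre_tree t)))"
  shows "0 < cert_count t v \<longleftrightarrow> is_leaf t v"
proof -
  have "map (\<lambda>v. 0 < cert_count t v) (butlast (tl (pre_tree t)))
          = map (is_leaf t) (butlast (tl (pre_tree t)))"
    using assms(1)
    by (simp add: dyck_type_eq_iff E_word_def peak_flags_D_word peak_flags_euler map_butlast)
  with assms(2) show ?thesis by (simp add: map_eq_conv)
qed

lemma inner_node_mem_butlast_pre_tree:
  assumes "u \<in> nodes t" and "u \<noteq> []" and "\<not> is_leaf t u"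
  shows "u \<in> set (butlast (tl (pre_tree t)))"
proof -
  have "u \<in> set (pre_tree t)"
    using nodes_subset_pre_tree assms(1) by blast
  with assms(2) have u: "u \<in> set (tl (pre_tree t))"
    by (metis pre_tree_conv_Cons set_ConsD)
  then have "is_leaf t (last (tl (pre_tree t)))"
    by (intro is_leaf_last_pre_tree) auto
  with assms(3) have "u \<noteq> last (tl (pre_tree t))" by auto
  with u show ?thesis
    by (cases "tl (pre_tree t)" rule: rev_exhaust) auto
qed

theorem mainTheorem12:
  fixes S :: ltree
  assumes "sticky S"
    and "num_edges S \<ge> 1"
    and "synchronized (D_word S) (E_word S)"
  shows "\<forall>u\<in>nodes S. u \<noteq> [] \<and> \<not> is_leaf S u \<longrightarrow> primary S u"
proof (intro ballI impI)
  fix u assume u: "u \<in> nodes S" "u \<noteq> [] \<and> \<not> is_leaf S u"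
  then have "u \<in> set (butlast (tl (pre_tree S)))"
    by (intro inner_node_mem_butlast_pre_tree) simp_all
  with assms(3) u have "cert_count S u = 0"
    using cert_count_pos_iff_is_leaf unfolding synchronized_def by blast
  then have "\<not> label S u < length u"
    using cert_count_pos_if_label_less u by fastforce
  moreover have "label S u \<le> length u"
    using assms(1) u by (simp add: sticky_def)
  ultimately show "primary S u"
    using u by (simp add: primary_def)
qed

end
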